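(* Let $G \ge 2$ be an integer and $p_t \in (0,1)$. Let $r_{t,1},\dots,r_{t,G}$ be i.i.d. $\mathrm{Bernoulli}(p_t)$ random variables, let $R=\sum_{j=1}^G r_{t,j}$, $\hat p_t = R/G$, and for $i\in[G]$ let $\hat A_{t,i} = r_{t,i}-\hat p_t$ and $A_{t,i} = r_{t,i}-p_t$. Let $\mathcal S=\{1\le R\le G-1\}$. Then for every $i\in[G]$: $\mathbb E[\hat A_{t,i}-A_{t,i}\mid \mathcal S] < 0$ if $p_t<1/2$; $\mathbb E[\hat A_{t,i}-A_{t,i}\mid \mathcal S] > 0$ if $p_t>1/2$; and $\mathbb E[\hat A_{t,i}-A_{t,i}\mid \mathcal S] = 0$ if and only if $p_t=1/2$.
   Context: Setting: for a prompt, $G$ responses are sampled independently from a policy; each response gets a binary reward, modeled as i.i.d. Bernoulli with success probability $p_t$ (the expected reward). $\hat p_t$ is the group baseline, $\hat A_{t,i}$ the group-relative advantage, $A_{t,i}$ the expected advantage, and $\mathcal S$ the non-degenerate event that the group is neither all-correct nor all-incorrect. *)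

theory Defs
  imports "HOL-Probability.Probability"
begin

text \<open>Joint law of the G i.i.d. Bernoulli(p) rewards r_1..r_G, as a pmf on
  outcomes \<omega> :: nat \<Rightarrow> bool (\<omega> j = True means response j is correct).\<close>
definition rewards_pmf :: "nat \<Rightarrow> real \<Rightarrow> (nat \<Rightarrow> bool) pmf" where
  "rewards_pmf G p = Pi_pmf {1..G} False (\<lambda>_. bernoulli_pmf p)"

definition reward :: "(nat \<Rightarrow> bool) \<Rightarrow> nat \<Rightarrow> real" where
  "reward \<omega> j = (if \<omega> j then 1 else 0)"

definition Rsum :: "nat \<Rightarrow> (nat \<Rightarrow> bool) \<Rightarrow> real" where
  "Rsum G \<omega> = (\<Sum>j=1..G. reward \<omega> j)"

definition phat :: "nat \<Rightarrow> (nat \<Rightarrow> bool) \<Rightarrow> real" where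
  "phat G \<omega> = Rsum G \<omega> / real G"

definition Ahat :: "nat \<Rightarrow> nat \<Rightarrow> (nat \<Rightarrow> bool) \<Rightarrow> real" where
  "Ahat G i \<omega> = reward \<omega> i - phat G \<omega>"

definition Aexp :: "real \<Rightarrow> nat \<Rightarrow> (nat \<Rightarrow> bool) \<Rightarrow> real" where
  "Aexp p i \<omega> = reward \<omega> i - p"

definition nondeg :: "nat \<Rightarrow> (nat \<Rightarrow> bool) set" where
  "nondeg G = {\<omega>. 1 \<le> Rsum G \<omega> \<and> Rsum G \<omega> \<le> real G - 1}"

definition cond_expect :: "'a pmf \<Rightarrow> 'a set \<Rightarrow> ('a \<Rightarrow> real) \<Rightarrow> real" where
  "cond_expect M S X = measure_pmf.expectation (cond_pmf M S) X"

end

theory Submission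
  imports Defs
begin

text \<open>The advantage error \<open>\<hat>A - A = p - \<hat>p\<close> does not depend on the response \<open>i\<close> and has
  unconditional mean zero. The degenerate outcomes excluded by \<open>\<S>\<close> are the all-wrong group,
  with error \<open>p\<close> and mass \<open>(1-p)\<^sup>G\<close>, and the all-right group, with error \<open>p-1\<close> and mass
  \<open>p\<^sup>G\<close>. Hence the error integrates to \<open>p(1-p)(p\<^bsup>G-1\<^esup> - (1-p)\<^bsup>G-1\<^esup>)\<close> over \<open>\<S>\<close>, whose
  sign is that of \<open>p - 1/2\<close>.\<close>

lemma cond_expect_finite_support:
  fixes M :: "'a pmf" and X :: "'a \<Rightarrow> real"
  assumes fin: "finite (set_pmf M)" and ne: "set_pmf M \<inter> S \<noteq> {}"
  shows "cond_expect M S X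
    = (measure_pmf.expectation M X - (\<Sum>a\<in>set_pmf M - S. X a * pmf M a)) / measure_pmf.prob M S"
proof -
  have expectation: "measure_pmf.expectation M X = (\<Sum>a\<in>set_pmf M. X a * pmf M a)"
    by (rule integral_measure_pmf_real[OF fin]) auto
  have "cond_expect M S X = (\<Sum>a\<in>set_pmf M \<inter> S. X a * pmf (cond_pmf M S) a)"
    unfolding cond_expect_def using fin
    by (intro integral_measure_pmf_real) (auto simp: set_cond_pmf[OF ne])
  also have "\<dots> = (\<Sum>a\<in>set_pmf M \<inter> S. X a * pmf M a) / measure_pmf.prob M S"
    by (simp add: pmf_cond[OF ne] sum_divide_distrib)
  also have "(\<Sum>a\<in>set_pmf M \<inter> S. X a * pmf M a)
      = measure_pmf.expectation M X - (\<Sum>a\<in>set_pmf M - S. X a * pmf M a)"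
    using expectation sum.Int_Diff[OF fin, of "\<lambda>a. X a * pmf M a" S] by simp
  finally show ?thesis .
qed

lemma sgn_power_diff:
  fixes a b :: "'a :: linordered_idom"
  assumes "0 \<le> a" and "0 \<le> b" and "n \<noteq> 0"
  shows "sgn (a ^ n - b ^ n) = sgn (a - b)"
  using assms power_strict_mono[of a b n] power_strict_mono[of b a n]
  by (cases a b rule: linorder_cases) auto

lemma Rsum_eq_card: "Rsum G \<omega> = real (card {j\<in>{1..G}. \<omega> j})"
  unfolding Rsum_def reward_def by (simp add: sum.If_cases Int_def conj_commute)

lemma set_pmf_rewards_pmf:
  assumes "0 < p" and "p < 1"
  shows "set_pmf (rewards_pmf G p) = {\<omega>. \<forall>j. j \<notin> {1..G} \<longrightarrow> \<not> \<omega> j}"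
  using assms unfolding rewards_pmf_def
  by (simp add: set_Pi_pmf o_def PiE_dflt_def)

lemma pmf_rewards_pmf:
  assumes "0 \<le> p" and "p \<le> 1" and "\<And>j. j \<notin> {1..G} \<Longrightarrow> \<not> \<omega> j"
  shows "pmf (rewards_pmf G p) \<omega> = (\<Prod>j=1..G. if \<omega> j then p else 1 - p)"
  unfolding rewards_pmf_def using assms by (subst pmf_Pi') (auto intro: prod.cong)

lemma finite_set_pmf_rewards_pmf: "finite (set_pmf (rewards_pmf G p))"
  unfolding rewards_pmf_def by (rule finite_subset[OF set_Pi_pmf_subset']) auto

lemma expectation_Rsum:
  assumes "0 \<le> p" and "p \<le> 1"
  shows "measure_pmf.expectation (rewards_pmf G p) (Rsum G) = real G * p"
proof -
  have expectation_reward: "measure_pmf.expectation (rewards_pmf G p) (\<lambda>\<omega>. reward \<omega> j) = p"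
    if "j \<in> {1..G}" for j
  proof -
    have "map_pmf (\<lambda>\<omega>. \<omega> j) (rewards_pmf G p) = bernoulli_pmf p"
      unfolding rewards_pmf_def using that by (simp add: Pi_pmf_component)
    then show ?thesis
      using assms integral_map_pmf[of "\<lambda>\<omega>. \<omega> j" "rewards_pmf G p" "\<lambda>b. if b then 1 else 0 :: real"]
      by (simp add: reward_def)
  qed
  have "measure_pmf.expectation (rewards_pmf G p) (Rsum G)
      = (\<Sum>j=1..G. measure_pmf.expectation (rewards_pmf G p) (\<lambda>\<omega>. reward \<omega> j))"
    unfolding Rsum_def
    by (intro Bochner_Integration.integral_sum integrable_measure_pmf_finite finite_set_pmf_rewards_pmf)
  also have "\<dots> = real G * p"
    by (simp add: expectation_reward)
  finally show ?thesis .
qed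

lemma not_nondeg_iff:
  assumes "\<And>j. j \<notin> {1..G} \<Longrightarrow> \<not> \<omega> j"
  shows "\<omega> \<notin> nondeg G \<longleftrightarrow> \<omega> = (\<lambda>_. False) \<or> \<omega> = (\<lambda>j. j \<in> {1..G})"
proof -
  define C where "C = {j\<in>{1..G}. \<omega> j}"
  have sub: "C \<subseteq> {1..G}"
    by (auto simp: C_def)
  then have "card C \<le> card {1..G}"
    by (rule card_mono[OF finite_atLeastAtMost])
  moreover have "Rsum G \<omega> = real (card C)"
    by (simp add: C_def Rsum_eq_card)
  ultimately have "\<omega> \<notin> nondeg G \<longleftrightarrow> card C = 0 \<or> card C = card {1..G}"
    unfolding nondeg_def by auto
  also have "\<dots> \<longleftrightarrow> C = {} \<or> C = {1..G}"
    using card_subset_eq[OF finite_atLeastAtMost sub] finite_subset[OF sub] by auto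
  also have "\<dots> \<longleftrightarrow> \<omega> = (\<lambda>_. False) \<or> \<omega> = (\<lambda>j. j \<in> {1..G})"
    using assms by (auto simp: C_def fun_eq_iff)
  finally show ?thesis .
qed

lemma set_pmf_rewards_pmf_diff_nondeg:
  assumes "0 < p" and "p < 1"
  shows "set_pmf (rewards_pmf G p) - nondeg G = {\<lambda>_. False, \<lambda>j. j \<in> {1..G}}"
proof -
  have "\<omega> \<in> set_pmf (rewards_pmf G p) - nondeg G \<longleftrightarrow> \<omega> \<in> {\<lambda>_. False, \<lambda>j. j \<in> {1..G}}" for \<omega>
    using not_nondeg_iff[of G \<omega>] by (auto simp: set_pmf_rewards_pmf[OF assms])
  then show ?thesis
    by blast
qed

lemma nondeg_Int_set_pmf_nonempty:
  assumes "G \<ge> 2" and "0 < p" and "p < 1"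
  shows "set_pmf (rewards_pmf G p) \<inter> nondeg G \<noteq> {}"
proof -
  define one_right :: "nat \<Rightarrow> bool" where "one_right = (\<lambda>j. j = 1)"
  have "one_right 1 \<noteq> False" and "one_right 2 \<noteq> (2 \<in> {1..G})"
    using assms by (auto simp: one_right_def)
  then have "one_right \<noteq> (\<lambda>_. False)" and "one_right \<noteq> (\<lambda>j. j \<in> {1..G})"
    by metis+
  moreover have support: "\<And>j. j \<notin> {1..G} \<Longrightarrow> \<not> one_right j"
    using assms by (auto simp: one_right_def)
  ultimately have "one_right \<in> set_pmf (rewards_pmf G p) \<inter> nondeg G"
    using not_nondeg_iff[of G one_right, OF support] by (auto simp: set_pmf_rewards_pmf assms)
  then show ?thesis
    by blast
qed

lemma Ahat_minus_Aexp: "Ahat G i \<omega> - Aexp p i \<omega> = p - phat G \<omega>"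
  unfolding Ahat_def Aexp_def by simp

lemma cond_expect_advantage_error:
  assumes "G \<ge> 2" and "0 < p" and "p < 1"
  shows "cond_expect (rewards_pmf G p) (nondeg G) (\<lambda>\<omega>. Ahat G i \<omega> - Aexp p i \<omega>)
    = p * (1 - p) * (p ^ (G - 1) - (1 - p) ^ (G - 1)) / measure_pmf.prob (rewards_pmf G p) (nondeg G)"
proof -
  define M where "M = rewards_pmf G p"
  define X where "X = (\<lambda>\<omega>. p - phat G \<omega>)"
  define all_wrong :: "nat \<Rightarrow> bool" where "all_wrong = (\<lambda>_. False)"
  define all_right :: "nat \<Rightarrow> bool" where "all_right = (\<lambda>j. j \<in> {1..G})"
  have nonempty: "set_pmf M \<inter> nondeg G \<noteq> {}"
    using nondeg_Int_set_pmf_nonempty[OF assms] by (simp add: M_def)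
  have "measure_pmf.expectation M X = 0"
    using assms expectation_Rsum[of p G] finite_set_pmf_rewards_pmf
    by (simp add: M_def X_def phat_def integrable_measure_pmf_finite)
  moreover have "set_pmf M - nondeg G = {all_wrong, all_right}" and "all_wrong \<noteq> all_right"
    using assms set_pmf_rewards_pmf_diff_nondeg[of p G]
    by (auto simp: M_def all_wrong_def all_right_def fun_eq_iff)
  moreover have "X all_wrong * pmf M all_wrong = p * (1 - p) ^ G"
    using assms pmf_rewards_pmf[of p G all_wrong]
    by (simp add: X_def phat_def Rsum_def reward_def all_wrong_def M_def)
  moreover have "X all_right * pmf M all_right = (p - 1) * p ^ G"
  proof -
    have "{j\<in>{1..G}. all_right j} = {1..G}"
      by (auto simp: all_right_def)
    then have "Rsum G all_right = real G"
      by (simp add: Rsum_eq_card)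
    moreover have "pmf M all_right = p ^ G"
      using assms pmf_rewards_pmf[of p G all_right] by (simp add: M_def all_right_def)
    ultimately show ?thesis
      using assms by (simp add: X_def phat_def)
  qed
  ultimately have "cond_expect M (nondeg G) X
      = (- p * (1 - p) ^ G - (p - 1) * p ^ G) / measure_pmf.prob M (nondeg G)"
    using cond_expect_finite_support[OF finite_set_pmf_rewards_pmf[of G p, folded M_def] nonempty]
    by (simp add: M_def)
  also have "- p * (1 - p) ^ G - (p - 1) * p ^ G = p * (1 - p) * (p ^ (G - 1) - (1 - p) ^ (G - 1))"
    using assms by (cases G) (auto simp: algebra_simps)
  finally show ?thesis
    by (simp add: M_def X_def Ahat_minus_Aexp)
qed

lemma sgn_cond_expect_advantage_error:
  assumes "G \<ge> 2" and "0 < p" and "p < 1"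
  shows "sgn (cond_expect (rewards_pmf G p) (nondeg G) (\<lambda>\<omega>. Ahat G i \<omega> - Aexp p i \<omega>))
    = sgn (p - 1/2)"
proof -
  have "measure_pmf.prob (rewards_pmf G p) (nondeg G) > 0"
    using nondeg_Int_set_pmf_nonempty[OF assms] by (metis disjoint_iff measure_pmf_posI)
  moreover have "sgn p = 1" and "sgn (1 - p) = 1"
    using assms by simp_all
  moreover have "sgn (p ^ (G - 1) - (1 - p) ^ (G - 1)) = sgn (p - (1 - p))"
    using assms by (intro sgn_power_diff) auto
  moreover have "sgn (p - (1 - p)) = sgn (p - 1/2)"
    by (simp add: sgn_if)
  ultimately show ?thesis
    by (simp add: cond_expect_advantage_error[OF assms] sgn_mult sgn_divide)
qed

theorem theorem1:
  fixes G :: nat and p :: real and i :: nat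
  assumes "G \<ge> 2" and "0 < p" and "p < 1" and "i \<in> {1..G}"
  shows "(p < 1/2 \<longrightarrow>
            cond_expect (rewards_pmf G p) (nondeg G) (\<lambda>\<omega>. Ahat G i \<omega> - Aexp p i \<omega>) < 0)
       \<and> (p > 1/2 \<longrightarrow>
            cond_expect (rewards_pmf G p) (nondeg G) (\<lambda>\<omega>. Ahat G i \<omega> - Aexp p i \<omega>) > 0)
       \<and> (cond_expect (rewards_pmf G p) (nondeg G) (\<lambda>\<omega>. Ahat G i \<omega> - Aexp p i \<omega>) = 0
            \<longleftrightarrow> p = 1/2)"
  using sgn_cond_expect_advantage_error[OF assms(1-3), of i]
  by (auto simp: sgn_if split: if_splits)

end
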